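(* Let $\mathfrak{A}$ be a $(\circ,\wedge,\mathsf{A})$-algebra and $\theta$ a representation of $\mathfrak{A}$ by partial functions. If $\theta$ is join complete, then $\theta$ is meet complete.
   Context: A $(\circ,\wedge,\mathsf{A})$-algebra is a set with two binary operations $\circ,\wedge$ and one unary operation $\mathsf{A}$. An algebra of partial functions of this signature is a set of partial functions, with base $X$ the union of all their domains and ranges, closed under: composition $f\circ g=\{(x,z)\mid \exists y\,(x,y)\in f,(y,z)\in g\}$; intersection; antidomain $\mathsf{A}(f)=\{(x,x)\mid x\in X, x\notin\mathrm{dom}(f)\}$. A representation by partial functions is an isomorphism onto such an algebra. The order on $\mathfrak{A}$ is $a\le b\iff a\wedge b=a$. A representation $\theta$ is meet complete if for every nonempty $S\subseteq\mathfrak{A}$ such that $\bigwedge S$ exists, $\theta(\bigwedge S)=\bigcap\theta[S]$; it is join complete if for every $S\subseteq\mathfrak{A}$ such that $\bigvee S$ exists, $\theta(\bigvee S)=\bigcup\theta[S]$. *)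

theory Defs
  imports Main
begin

definition base_of :: "('a \<Rightarrow> ('x \<times> 'x) set) \<Rightarrow> 'x set" where
  "base_of \<theta> = (\<Union>a. Domain (\<theta> a) \<union> Range (\<theta> a))"

definition antidom_rel :: "'x set \<Rightarrow> ('x \<times> 'x) set \<Rightarrow> ('x \<times> 'x) set" where
  "antidom_rel X f = {(x, x) | x. x \<in> X \<and> x \<notin> Domain f}"

definition is_pf_representation ::
  "('a \<Rightarrow> 'a \<Rightarrow> 'a) \<Rightarrow> ('a \<Rightarrow> 'a \<Rightarrow> 'a) \<Rightarrow> ('a \<Rightarrow> 'a)
   \<Rightarrow> ('a \<Rightarrow> ('x \<times> 'x) set) \<Rightarrow> bool" where
  "is_pf_representation cmp meet antidom \<theta> \<longleftrightarrow>
     inj \<theta> \<and>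
     (\<forall>a. single_valued (\<theta> a)) \<and>
     (\<forall>a b. \<theta> (cmp a b) = \<theta> a O \<theta> b) \<and>
     (\<forall>a b. \<theta> (meet a b) = \<theta> a \<inter> \<theta> b) \<and>
     (\<forall>a. \<theta> (antidom a) = antidom_rel (base_of \<theta>) (\<theta> a))"

definition alg_le :: "('a \<Rightarrow> 'a \<Rightarrow> 'a) \<Rightarrow> 'a \<Rightarrow> 'a \<Rightarrow> bool" where
  "alg_le meet a b \<longleftrightarrow> meet a b = a"

definition is_alg_join :: "('a \<Rightarrow> 'a \<Rightarrow> 'a) \<Rightarrow> 'a set \<Rightarrow> 'a \<Rightarrow> bool" where
  "is_alg_join meet S j \<longleftrightarrow> (\<forall>s\<in>S. alg_le meet s j) \<and>
     (\<forall>u. (\<forall>s\<in>S. alg_le meet s u) \<longrightarrow> alg_le meet j u)"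

definition is_alg_meet :: "('a \<Rightarrow> 'a \<Rightarrow> 'a) \<Rightarrow> 'a set \<Rightarrow> 'a \<Rightarrow> bool" where
  "is_alg_meet meet S m \<longleftrightarrow> (\<forall>s\<in>S. alg_le meet m s) \<and>
     (\<forall>l. (\<forall>s\<in>S. alg_le meet l s) \<longrightarrow> alg_le meet l m)"

definition join_complete :: "('a \<Rightarrow> 'a \<Rightarrow> 'a) \<Rightarrow> ('a \<Rightarrow> ('x \<times> 'x) set) \<Rightarrow> bool" where
  "join_complete meet \<theta> \<longleftrightarrow>
     (\<forall>S j. is_alg_join meet S j \<longrightarrow> \<theta> j = \<Union> (\<theta> ` S))"

definition meet_complete :: "('a \<Rightarrow> 'a \<Rightarrow> 'a) \<Rightarrow> ('a \<Rightarrow> ('x \<times> 'x) set) \<Rightarrow> bool" where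
  "meet_complete meet \<theta> \<longleftrightarrow>
     (\<forall>S m. S \<noteq> {} \<and> is_alg_meet meet S m \<longrightarrow> \<theta> m = \<Inter> (\<theta> ` S))"

end

theory Submission
  imports Defs
begin

(* Let m be the meet of a nonempty set S and fix s0 in S.  Antidomain turns
   meets into joins: A(m) is the join of the elements A(s0 \<and> s), s in S.
   The upper-bound half only needs that the order is inclusion; the least-bound
   half uses that the signature can restrict s0 to the points p with (p, p)
   not in a given upper bound u, which yields a lower bound of S.
   Join completeness then says that A(m) is represented by the union of the
   A(s0 \<and> s); hence every point in the domain of all the s, with a common
   image, lies in the domain of m, and single-valuedness makes the pair belong
   to m. *)

locale pf_representation =
  fixes cmp meet :: "'a \<Rightarrow> 'a \<Rightarrow> 'a" and antidom :: "'a \<Rightarrow> 'a"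
    and \<theta> :: "'a \<Rightarrow> ('x \<times> 'x) set"
  assumes rep: "is_pf_representation cmp meet antidom \<theta>"
begin

lemma inj_rep: "inj \<theta>"
  and single_valued_rep: "single_valued (\<theta> a)"
  and rep_cmp: "\<theta> (cmp a b) = \<theta> a O \<theta> b"
  and rep_meet: "\<theta> (meet a b) = \<theta> a \<inter> \<theta> b"
  and rep_antidom: "\<theta> (antidom a) = antidom_rel (base_of \<theta>) (\<theta> a)"
  using rep unfolding is_pf_representation_def by auto

lemma le_iff_subset: "alg_le meet a b \<longleftrightarrow> \<theta> a \<subseteq> \<theta> b"
proof -
  have "alg_le meet a b \<longleftrightarrow> \<theta> (meet a b) = \<theta> a"
    unfolding alg_le_def using inj_rep by (metis injD)
  then show ?thesis using rep_meet by auto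
qed

lemma pair_in_base: "(p, q) \<in> \<theta> a \<Longrightarrow> p \<in> base_of \<theta>"
  unfolding base_of_def by blast

lemma antidom_iff:
  "(p, q) \<in> \<theta> (antidom a) \<longleftrightarrow> p = q \<and> p \<in> base_of \<theta> \<and> p \<notin> Domain (\<theta> a)"
  using rep_antidom unfolding antidom_rel_def by auto

text \<open>Any term A(a);a represents the empty function, so its antidomain is
  the identity on the base.\<close>
definition one :: 'a where
  "one = antidom (cmp (antidom undefined) undefined)"

lemma one_iff: "(p, q) \<in> \<theta> one \<longleftrightarrow> p = q \<and> p \<in> base_of \<theta>"
proof -
  have "\<theta> (cmp (antidom undefined) undefined) = {}"
    unfolding rep_cmp using antidom_iff by auto
  then show ?thesis unfolding one_def antidom_iff by simp
qed

lemma restrict_iff: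
  "(p, q) \<in> \<theta> (cmp (antidom (meet u one)) a) \<longleftrightarrow> (p, p) \<notin> \<theta> u \<and> (p, q) \<in> \<theta> a"
proof -
  have "p \<in> Domain (\<theta> (meet u one)) \<longleftrightarrow> (p, p) \<in> \<theta> u \<and> p \<in> base_of \<theta>" for p
    using rep_meet one_iff by auto
  then show ?thesis
    unfolding rep_cmp using antidom_iff pair_in_base by auto
qed

lemma not_in_domain_meet:
  assumes "(p, q) \<in> \<theta> s0" and "(p, q) \<notin> \<theta> s"
  shows "p \<notin> Domain (\<theta> (meet s0 s))"
  using assms single_valued_rep[of s0] unfolding rep_meet single_valued_def by auto

lemma antidom_meet_is_join:
  assumes m: "is_alg_meet meet S m" and s0: "s0 \<in> S"
  shows "is_alg_join meet ((\<lambda>s. antidom (meet s0 s)) ` S) (antidom m)"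
proof -
  have m_lower: "\<theta> m \<subseteq> \<theta> s" if "s \<in> S" for s
    using m that unfolding is_alg_meet_def le_iff_subset by auto
  have m_greatest: "\<theta> l \<subseteq> \<theta> m" if "\<And>s. s \<in> S \<Longrightarrow> \<theta> l \<subseteq> \<theta> s" for l
    using m that unfolding is_alg_meet_def le_iff_subset by auto
  have upper: "\<theta> (antidom (meet s0 s)) \<subseteq> \<theta> (antidom m)" if s: "s \<in> S" for s
  proof -
    have dom: "Domain (\<theta> m) \<subseteq> Domain (\<theta> (meet s0 s))"
      using m_lower[OF s] m_lower[OF s0] rep_meet by (metis Domain_mono Int_greatest)
    show ?thesis
    proof (rule subrelI)
      fix a b assume "(a, b) \<in> \<theta> (antidom (meet s0 s))"
      with dom show "(a, b) \<in> \<theta> (antidom m)"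
        unfolding antidom_iff by blast
    qed
  qed
  have least: "\<theta> (antidom m) \<subseteq> \<theta> u"
    if u: "\<And>s. s \<in> S \<Longrightarrow> \<theta> (antidom (meet s0 s)) \<subseteq> \<theta> u" for u
  proof
    fix pq assume "pq \<in> \<theta> (antidom m)"
    then obtain p where pq: "pq = (p, p)" and p: "p \<in> base_of \<theta>" "p \<notin> Domain (\<theta> m)"
      using antidom_iff by (cases pq) auto
    \<comment> \<open>s0 restricted to the points whose loop is not in u is below every s\<close>
    define r where "r = cmp (antidom (meet u one)) s0"
    have "\<theta> r \<subseteq> \<theta> m"
    proof (rule m_greatest, rule subrelI)
      fix s a b assume s: "s \<in> S" and "(a, b) \<in> \<theta> r"
      then have "(a, a) \<notin> \<theta> u" "(a, b) \<in> \<theta> s0"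
        unfolding r_def restrict_iff by auto
      show "(a, b) \<in> \<theta> s"
      proof (rule ccontr)
        assume "(a, b) \<notin> \<theta> s"
        with \<open>(a, b) \<in> \<theta> s0\<close> have "a \<notin> Domain (\<theta> (meet s0 s))"
          by (rule not_in_domain_meet)
        then have "(a, a) \<in> \<theta> (antidom (meet s0 s))"
          using pair_in_base[OF \<open>(a, b) \<in> \<theta> s0\<close>] antidom_iff by simp
        then show False using u[OF s] \<open>(a, a) \<notin> \<theta> u\<close> by auto
      qed
    qed
    show "pq \<in> \<theta> u"
    proof (cases "p \<in> Domain (\<theta> s0)")
      case True
      then obtain q where q: "(p, q) \<in> \<theta> s0" by auto
      show ?thesis
      proof (rule ccontr)
        assume "pq \<notin> \<theta> u"
        then have "(p, q) \<in> \<theta> r"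
          using q pq unfolding r_def restrict_iff by simp
        then show False using \<open>\<theta> r \<subseteq> \<theta> m\<close> p(2) by auto
      qed
    next
      case False
      then have "(p, p) \<in> \<theta> (antidom (meet s0 s0))"
        using p(1) antidom_iff rep_meet by auto
      then show ?thesis using u[OF s0] pq by auto
    qed
  qed
  show ?thesis
    unfolding is_alg_join_def le_iff_subset using upper least by auto
qed

lemma meet_is_intersection:
  assumes m: "is_alg_meet meet S m" and s0: "s0 \<in> S"
    and union: "\<theta> (antidom m) = (\<Union>s\<in>S. \<theta> (antidom (meet s0 s)))"
  shows "\<theta> m = \<Inter> (\<theta> ` S)"
proof
  show "\<theta> m \<subseteq> \<Inter> (\<theta> ` S)"
    using m unfolding is_alg_meet_def le_iff_subset by auto
  show "\<Inter> (\<theta> ` S) \<subseteq> \<theta> m"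
  proof (rule subrelI)
    fix p q assume "(p, q) \<in> \<Inter> (\<theta> ` S)"
    then have all: "(p, q) \<in> \<theta> s" if "s \<in> S" for s
      using that by auto
    have "p \<in> Domain (\<theta> m)"
    proof (rule ccontr)
      assume "p \<notin> Domain (\<theta> m)"
      then have "(p, p) \<in> \<theta> (antidom m)"
        using antidom_iff pair_in_base[OF all[OF s0]] by auto
      then obtain s where "s \<in> S" "p \<notin> Domain (\<theta> (meet s0 s))"
        unfolding union using antidom_iff by blast
      then show False using all s0 unfolding rep_meet by blast
    qed
    then obtain z where z: "(p, z) \<in> \<theta> m" by auto
    then have "(p, z) \<in> \<theta> s0"
      using m s0 unfolding is_alg_meet_def le_iff_subset by auto
    then have "z = q"
      using all[OF s0] single_valued_rep[of s0] unfolding single_valued_def by auto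
    then show "(p, q) \<in> \<theta> m" using z by simp
  qed
qed

end

theorem mainTheorem3:
  fixes cmp meet :: "'a \<Rightarrow> 'a \<Rightarrow> 'a" and antidom :: "'a \<Rightarrow> 'a"
    and \<theta> :: "'a \<Rightarrow> ('x \<times> 'x) set"
  assumes "is_pf_representation cmp meet antidom \<theta>"
    and "join_complete meet \<theta>"
  shows "meet_complete meet \<theta>"
  unfolding meet_complete_def
proof (intro allI impI)
  interpret pf_representation cmp meet antidom \<theta> by (rule pf_representation.intro) fact
  fix S m assume "S \<noteq> {} \<and> is_alg_meet meet S m"
  then obtain s0 where s0: "s0 \<in> S" and m: "is_alg_meet meet S m" by auto
  have "is_alg_join meet ((\<lambda>s. antidom (meet s0 s)) ` S) (antidom m)"
    using antidom_meet_is_join[OF m s0] .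
  then have "\<theta> (antidom m) = (\<Union>s\<in>S. \<theta> (antidom (meet s0 s)))"
    using assms(2) unfolding join_complete_def by (simp add: image_image)
  then show "\<theta> m = \<Inter> (\<theta> ` S)"
    using meet_is_intersection[OF m s0] by blast
qed

end
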